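(* Let $A,B,X,Y\in\mathcal{B}(\mathcal{H})$. Then \begin{equation*} w(X^*AY+Y^*BX)\leq 2\|X\|\|Y\|\, w\left(\begin{bmatrix} 0 &A \\ B& 0 \end{bmatrix}\right). \end{equation*} In particular, $$w(X^*AY+Y^*AX)\leq 2\|X\|\|Y\|\, w(A).$$
   Context: $\mathcal{H}$ is a complex Hilbert space and $\mathcal{B}(\mathcal{H})$ is the $C^*$-algebra of all bounded linear operators on $\mathcal{H}$. For $T\in\mathcal{B}(\mathcal{H})$, $w(T)=\sup\{|\langle Tx,x\rangle|:\|x\|=1\}$ is the numerical radius and $\|T\|$ the operator norm. A $2\times 2$ operator matrix with entries in $\mathcal{B}(\mathcal{H})$ is regarded as an operator on $\mathcal{H}\oplus\mathcal{H}$. *)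

theory Defs
  imports "HOL-Analysis.Analysis"
begin

class complex_vector = real_vector +
  fixes scaleC :: "complex \<Rightarrow> 'a \<Rightarrow> 'a"
  assumes scaleC_add_right: "scaleC a (x + y) = scaleC a x + scaleC a y"
    and scaleC_add_left: "scaleC (a + b) x = scaleC a x + scaleC b x"
    and scaleC_scaleC: "scaleC a (scaleC b x) = scaleC (a * b) x"
    and scaleC_one: "scaleC 1 x = x"
    and scaleR_scaleC: "scaleR r x = scaleC (complex_of_real r) x"

class complex_inner = complex_vector + real_normed_vector +
  fixes cinner :: "'a \<Rightarrow> 'a \<Rightarrow> complex"
  assumes cinner_commute: "cinner x y = cnj (cinner y x)"
    and cinner_add_left: "cinner (x + y) z = cinner x z + cinner y z"
    and cinner_scaleC_left: "cinner (scaleC c x) y = cnj c * cinner x y"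
    and norm_eq_sqrt_cinner: "norm x = sqrt (Re (cinner x x))"

class chilbert_space = complex_inner + complete_space

definition bounded_op :: "('a::complex_inner \<Rightarrow> 'a) \<Rightarrow> bool" where
  "bounded_op T \<longleftrightarrow>
     (\<forall>x y. T (x + y) = T x + T y) \<and>
     (\<forall>c x. T (scaleC c x) = scaleC c (T x)) \<and>
     (\<exists>K. \<forall>x. norm (T x) \<le> norm x * K)"

definition is_adjoint :: "('a::complex_inner \<Rightarrow> 'a) \<Rightarrow> ('a \<Rightarrow> 'a) \<Rightarrow> bool" where
  "is_adjoint T Ts \<longleftrightarrow> (\<forall>x y. cinner (T x) y = cinner x (Ts y))"

text \<open>Numerical radius w(T) = sup{|<Tx,x>| : ||x|| = 1}; the 0 only matters for H = {0}.\<close>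
definition numerical_radius :: "('a::complex_inner \<Rightarrow> 'a) \<Rightarrow> real" where
  "numerical_radius T = Sup (insert 0 {cmod (cinner (T x) x) | x. norm x = 1})"

text \<open>Numerical radius of the 2x2 operator matrix [[P, Q], [R, S]] acting on H \<oplus> H
  (with the standard inner product <(x,y),(u,v)> = <x,u> + <y,v>), written out.\<close>
definition numerical_radius2 ::
  "('a::complex_inner \<Rightarrow> 'a) \<Rightarrow> ('a \<Rightarrow> 'a) \<Rightarrow> ('a \<Rightarrow> 'a) \<Rightarrow> ('a \<Rightarrow> 'a) \<Rightarrow> real" where
  "numerical_radius2 P Q R S =
     Sup (insert 0 {cmod (cinner (P x + Q y) x + cinner (R x + S y) y) | x y.
                     (norm x)\<^sup>2 + (norm y)\<^sup>2 = 1})"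

end

theory Submission
  imports Defs
begin

text \<open>For a unit vector x, the sesquilinearity of the inner product and the adjoint relations give
  \<open><(X\<^sup>*AY + Y\<^sup>*BX)x, x> = <A(Yx), Xx> + <B(Xx), Yx>\<close>, which is the value of the quadratic form of
  \<open>[[0, A], [B, 0]]\<close> at \<open>(Xx, Yx)\<close>. Rescaling \<open>Xx\<close> and \<open>Yx\<close> to vectors of squared norm 1/2 each
  turns this into a unit vector of \<open>H \<oplus> H\<close>, so the value is at most
  \<open>2 \<parallel>Xx\<parallel> \<parallel>Yx\<parallel> w([[0, A], [B, 0]])\<close>.
  For \<open>B = A\<close>, polarization writes \<open><Ay, x> + <Ax, y>\<close> as half the difference of
  \<open><A(x+y), x+y>\<close> and \<open><A(x-y), x-y>\<close>; together with the parallelogram law this gives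
  \<open>w([[0, A], [A, 0]]) \<le> w(A)\<close>.\<close>

lemma cinner_add_right: "cinner (x::'a::complex_inner) (y + z) = cinner x y + cinner x z"
  by (metis cinner_add_left cinner_commute complex_cnj_add)

lemma cinner_scaleC_right: "cinner (x::'a::complex_inner) (scaleC c y) = c * cinner x y"
  by (metis cinner_commute cinner_scaleC_left complex_cnj_cnj complex_cnj_mult)

lemma cinner_zero_left [simp]: "cinner 0 (y::'a::complex_inner) = 0"
  using cinner_add_left[of 0 0 y] by simp

lemma cinner_zero_right [simp]: "cinner (x::'a::complex_inner) 0 = 0"
  using cinner_add_right[of x 0 0] by simp

lemma cinner_diff_left: "cinner (x - (y::'a::complex_inner)) z = cinner x z - cinner y z"
  using cinner_add_left[of "x - y" y z] by simp

lemma cinner_diff_right: "cinner (x::'a::complex_inner) (y - z) = cinner x y - cinner x z"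
  using cinner_add_right[of x "y - z" z] by simp

lemma cinner_scaleR_left: "cinner (scaleR r (x::'a::complex_inner)) y = of_real r * cinner x y"
  by (simp add: scaleR_scaleC cinner_scaleC_left)

lemma cinner_scaleR_right: "cinner (x::'a::complex_inner) (scaleR r y) = of_real r * cinner x y"
  by (simp add: scaleR_scaleC cinner_scaleC_right)

lemma cinner_self_eq_norm_power2: "cinner (x::'a::complex_inner) x = of_real ((norm x)\<^sup>2)"
proof -
  have im: "Im (cinner x x) = 0"
    using cinner_commute[of x x] by (metis cnj.sel(2) equation_minus_iff neg_equal_zero)
  have "Re (cinner x x) \<ge> 0"
    using norm_eq_sqrt_cinner[of x] norm_ge_zero[of x]
    by (metis not_le real_sqrt_less_iff real_sqrt_zero)
  then have "(norm x)\<^sup>2 = Re (cinner x x)"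
    using norm_eq_sqrt_cinner[of x] by simp
  then show ?thesis
    using im by (simp add: complex_eq_iff)
qed

lemma cmod_cinner_le: "cmod (cinner (x::'a::complex_inner) y) \<le> norm x * norm y"
proof (cases "x = 0")
  case True
  then show ?thesis by simp
next
  case False
  define n where "n = (norm x)\<^sup>2"
  have n: "n > 0"
    using False by (simp add: n_def)
  define p where "p = cinner x y"
  define c where "c = p / of_real n"
  define z where "z = y - scaleC c x"
  have "cinner z z = cinner y y - c * cinner y x - cnj c * cinner x y + cnj c * c * cinner x x"
    by (simp add: z_def cinner_diff_left cinner_diff_right cinner_scaleC_left cinner_scaleC_right
        algebra_simps)
  also have "\<dots> = of_real ((norm y)\<^sup>2) - c * cnj p - cnj c * p + cnj c * c * of_real n"
    by (simp add: cinner_self_eq_norm_power2 n_def p_def cinner_commute[of y x])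
  also have "\<dots> = of_real ((norm y)\<^sup>2 - (cmod p)\<^sup>2 / n)"
    using n by (simp add: c_def field_simps flip: complex_norm_square)
  finally have "(norm z)\<^sup>2 = (norm y)\<^sup>2 - (cmod p)\<^sup>2 / n"
    by (simp only: cinner_self_eq_norm_power2 of_real_eq_iff)
  then have "(cmod p)\<^sup>2 / n \<le> (norm y)\<^sup>2"
    by (metis diff_ge_0_iff_ge zero_le_power2)
  then have "(cmod p)\<^sup>2 \<le> (norm x * norm y)\<^sup>2"
    using n by (simp add: n_def divide_le_eq power_mult_distrib mult.commute)
  then show ?thesis
    unfolding p_def by (meson mult_nonneg_nonneg norm_ge_zero power2_le_imp_le)
qed

lemma polarization_cinner:
  fixes x y :: "'a::complex_inner"
  assumes "linear A"
  shows "2 * (cinner (A y) x + cinner (A x) y)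
    = cinner (A (x + y)) (x + y) - cinner (A (x - y)) (x - y)"
  by (simp add: linear_add[OF assms] linear_diff[OF assms] cinner_add_left cinner_add_right
      cinner_diff_left cinner_diff_right algebra_simps)

lemma parallelogram_law_complex_inner:
  fixes x y :: "'a::complex_inner"
  shows "(norm (x + y))\<^sup>2 + (norm (x - y))\<^sup>2 = 2 * ((norm x)\<^sup>2 + (norm y)\<^sup>2)"
proof -
  have "complex_of_real ((norm (x + y))\<^sup>2 + (norm (x - y))\<^sup>2)
      = cinner (x + y) (x + y) + cinner (x - y) (x - y)"
    by (simp only: cinner_self_eq_norm_power2 of_real_add)
  also have "\<dots> = 2 * cinner x x + 2 * cinner y y"
    by (simp add: cinner_add_left cinner_add_right cinner_diff_left cinner_diff_right
        algebra_simps)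
  also have "\<dots> = of_real (2 * ((norm x)\<^sup>2 + (norm y)\<^sup>2))"
    by (simp add: cinner_self_eq_norm_power2)
  finally show ?thesis
    by (simp only: of_real_eq_iff)
qed

lemma bounded_op_scaleR: "bounded_op T \<Longrightarrow> T (scaleR r x) = scaleR r (T x)"
  unfolding bounded_op_def by (simp add: scaleR_scaleC)

lemma bounded_op_imp_bounded_linear:
  assumes "bounded_op T"
  shows "bounded_linear T"
proof -
  from assms obtain K where "\<And>x. norm (T x) \<le> norm x * K"
    unfolding bounded_op_def by blast
  then show ?thesis
    by (intro bounded_linear_intro[OF _ bounded_op_scaleR[OF assms]])
      (use assms in \<open>simp_all add: bounded_op_def\<close>)
qed

lemma bounded_op_imp_linear: "bounded_op T \<Longrightarrow> linear T"
  by (simp add: bounded_linear.linear bounded_op_imp_bounded_linear)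

lemma bounded_op_zero: "bounded_op T \<Longrightarrow> T 0 = 0"
  by (simp add: bounded_op_imp_linear linear_0)

lemma onorm_bounded_op_nonneg: "bounded_op T \<Longrightarrow> 0 \<le> onorm T"
  by (rule onorm_pos_le[OF bounded_op_imp_bounded_linear])

lemma cmod_cinner_bounded_op_le:
  assumes "bounded_op T"
  shows "cmod (cinner (T y) x) \<le> onorm T * norm y * norm x"
proof -
  have "cmod (cinner (T y) x) \<le> norm (T y) * norm x"
    by (rule cmod_cinner_le)
  also have "\<dots> \<le> onorm T * norm y * norm x"
    by (intro mult_right_mono onorm[OF bounded_op_imp_bounded_linear[OF assms]]) simp
  finally show ?thesis .
qed

lemma cinner_bounded_op_scaleR:
  assumes "bounded_op T"
  shows "cinner (T (scaleR a y)) (scaleR b x) = of_real (a * b) * cinner (T y) x"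
  by (simp add: bounded_op_scaleR[OF assms] cinner_scaleR_left cinner_scaleR_right)

lemma le_Sup_insert_zero:
  fixes S :: "real set"
  assumes "bdd_above S" "s \<in> S"
  shows "s \<le> Sup (insert 0 S)"
  using assms by (intro cSup_upper) auto

lemma Sup_insert_zero_nonneg:
  fixes S :: "real set"
  assumes "bdd_above S"
  shows "0 \<le> Sup (insert 0 S)"
  using assms by (intro cSup_upper) auto

lemma Sup_insert_zero_le:
  fixes S :: "real set"
  assumes "0 \<le> K" "\<And>s. s \<in> S \<Longrightarrow> s \<le> K"
  shows "Sup (insert 0 S) \<le> K"
  using assms by (intro cSup_least) auto

lemma bdd_above_numerical_range:
  assumes "bounded_op A"
  shows "bdd_above {cmod (cinner (A x) x) | x. norm x = 1}"
proof (intro bdd_aboveI[of _ "onorm A"], clarify)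
  fix x :: 'a
  assume "norm x = 1"
  then show "cmod (cinner (A x) x) \<le> onorm A"
    using cmod_cinner_bounded_op_le[OF assms, of x x] by simp
qed

lemma numerical_radius_nonneg: "bounded_op A \<Longrightarrow> 0 \<le> numerical_radius A"
  unfolding numerical_radius_def by (intro Sup_insert_zero_nonneg bdd_above_numerical_range)

lemma cmod_cinner_le_numerical_radius:
  assumes "bounded_op A"
  shows "cmod (cinner (A z) z) \<le> numerical_radius A * (norm z)\<^sup>2"
proof (cases "z = 0")
  case True
  then show ?thesis
    using bounded_op_zero[OF assms] by simp
next
  case False
  define r where "r = 1 / norm z"
  have "norm (scaleR r z) = 1"
    using False by (simp add: r_def)
  then have "cmod (cinner (A (scaleR r z)) (scaleR r z)) \<le> numerical_radius A"
    unfolding numerical_radius_def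
    by (intro le_Sup_insert_zero bdd_above_numerical_range[OF assms]) blast
  then have "r * r * cmod (cinner (A z) z) \<le> numerical_radius A"
    by (simp add: cinner_bounded_op_scaleR[OF assms] norm_mult abs_mult)
  then show ?thesis
    using False by (simp add: r_def field_simps power2_eq_square)
qed

lemma numerical_radius2_offdiag:
  "numerical_radius2 (\<lambda>_. 0) A B (\<lambda>_. 0)
    = Sup (insert 0 {cmod (cinner (A y) x + cinner (B x) y) | x y. (norm x)\<^sup>2 + (norm y)\<^sup>2 = 1})"
  by (simp add: numerical_radius2_def)

lemma bdd_above_offdiag_numerical_range:
  assumes "bounded_op A" "bounded_op B"
  shows "bdd_above {cmod (cinner (A y) x + cinner (B x) y) | x y. (norm x)\<^sup>2 + (norm y)\<^sup>2 = 1}"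
proof (intro bdd_aboveI[of _ "onorm A + onorm B"], clarify)
  fix x y :: 'a
  assume unit: "(norm x)\<^sup>2 + (norm y)\<^sup>2 = 1"
  then have "(norm x)\<^sup>2 \<le> 1" "(norm y)\<^sup>2 \<le> 1"
    using zero_le_power2[of "norm x"] zero_le_power2[of "norm y"] by linarith+
  then have "norm x \<le> 1" "norm y \<le> 1"
    by (simp_all add: abs_square_le_1)
  then have "onorm A * (norm y * norm x) \<le> onorm A" "onorm B * (norm x * norm y) \<le> onorm B"
    by (simp_all add: mult_left_le mult_le_one onorm_bounded_op_nonneg assms)
  then show "cmod (cinner (A y) x + cinner (B x) y) \<le> onorm A + onorm B"
    using norm_triangle_ineq[of "cinner (A y) x" "cinner (B x) y"]
      cmod_cinner_bounded_op_le[OF assms(1), of y x] cmod_cinner_bounded_op_le[OF assms(2), of x y]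
    by (simp add: mult.assoc)
qed

lemma numerical_radius2_offdiag_nonneg:
  "bounded_op A \<Longrightarrow> bounded_op B \<Longrightarrow> 0 \<le> numerical_radius2 (\<lambda>_. 0) A B (\<lambda>_. 0)"
  unfolding numerical_radius2_offdiag
  by (intro Sup_insert_zero_nonneg bdd_above_offdiag_numerical_range)

lemma cmod_cinner_offdiag_le_numerical_radius2:
  assumes "bounded_op A" "bounded_op B"
  shows "cmod (cinner (A u) v + cinner (B v) u)
    \<le> 2 * norm u * norm v * numerical_radius2 (\<lambda>_. 0) A B (\<lambda>_. 0)"
proof (cases "u = 0 \<or> v = 0")
  case True
  then show ?thesis
    using bounded_op_zero[OF assms(1)] bounded_op_zero[OF assms(2)]
      numerical_radius2_offdiag_nonneg[OF assms] by auto
next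
  case False
  define a where "a = 1 / (sqrt 2 * norm u)"
  define b where "b = 1 / (sqrt 2 * norm v)"
  have ab: "a * b > 0" "a * b = 1 / (2 * norm u * norm v)"
    using False by (simp_all add: a_def b_def)
  have "(norm (scaleR b v))\<^sup>2 + (norm (scaleR a u))\<^sup>2 = 1"
    using False by (simp add: a_def b_def power_mult_distrib power_divide)
  then have "cmod (cinner (A (scaleR a u)) (scaleR b v) + cinner (B (scaleR b v)) (scaleR a u))
      \<le> numerical_radius2 (\<lambda>_. 0) A B (\<lambda>_. 0)"
    unfolding numerical_radius2_offdiag
    by (intro le_Sup_insert_zero bdd_above_offdiag_numerical_range[OF assms]) blast
  also have "cinner (A (scaleR a u)) (scaleR b v) + cinner (B (scaleR b v)) (scaleR a u)
      = of_real (a * b) * (cinner (A u) v + cinner (B v) u)"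
    by (simp add: cinner_bounded_op_scaleR assms distrib_left mult.commute[of b a])
  finally have "a * b * cmod (cinner (A u) v + cinner (B v) u)
      \<le> numerical_radius2 (\<lambda>_. 0) A B (\<lambda>_. 0)"
    using ab(1) by (simp only: norm_mult norm_of_real abs_of_pos)
  then show ?thesis
    using False unfolding ab(2) by (simp add: field_simps)
qed

lemma numerical_radius2_offdiag_le_numerical_radius:
  assumes "bounded_op A"
  shows "numerical_radius2 (\<lambda>_. 0) A A (\<lambda>_. 0) \<le> numerical_radius A"
  unfolding numerical_radius2_offdiag
proof (intro Sup_insert_zero_le numerical_radius_nonneg[OF assms], clarify)
  fix x y :: 'a
  assume unit: "(norm x)\<^sup>2 + (norm y)\<^sup>2 = 1"
  have "2 * cmod (cinner (A y) x + cinner (A x) y)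
      = cmod (cinner (A (x + y)) (x + y) - cinner (A (x - y)) (x - y))"
    by (metis polarization_cinner bounded_op_imp_linear[OF assms] norm_mult norm_numeral)
  also have "\<dots> \<le> cmod (cinner (A (x + y)) (x + y)) + cmod (cinner (A (x - y)) (x - y))"
    by (rule norm_triangle_ineq4)
  also have "\<dots> \<le> numerical_radius A * ((norm (x + y))\<^sup>2 + (norm (x - y))\<^sup>2)"
    using cmod_cinner_le_numerical_radius[OF assms, of "x + y"]
      cmod_cinner_le_numerical_radius[OF assms, of "x - y"]
    by (simp add: distrib_left)
  also have "\<dots> = 2 * numerical_radius A"
    by (simp add: parallelogram_law_complex_inner unit)
  finally show "cmod (cinner (A y) x + cinner (A x) y) \<le> numerical_radius A"
    by simp
qed

lemma cinner_adjoint_left: "is_adjoint X Xs \<Longrightarrow> cinner (Xs z) x = cinner z (X x)"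
  unfolding is_adjoint_def by (metis cinner_commute)

lemma numerical_radius_adjoint_sandwich_le:
  fixes A B X Y Xs Ys :: "'a::complex_inner \<Rightarrow> 'a"
  assumes "bounded_op A" "bounded_op B" "bounded_op X" "bounded_op Y"
    and "is_adjoint X Xs" "is_adjoint Y Ys"
  shows "numerical_radius (\<lambda>x. Xs (A (Y x)) + Ys (B (X x)))
    \<le> 2 * onorm X * onorm Y * numerical_radius2 (\<lambda>_. 0) A B (\<lambda>_. 0)"
proof -
  let ?W = "numerical_radius2 (\<lambda>_. 0) A B (\<lambda>_. 0)"
  have W: "0 \<le> ?W"
    by (rule numerical_radius2_offdiag_nonneg[OF assms(1,2)])
  have X: "0 \<le> onorm X" and Y: "0 \<le> onorm Y"
    by (simp_all add: onorm_bounded_op_nonneg assms(3,4))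
  have "cmod (cinner (Xs (A (Y x)) + Ys (B (X x))) x) \<le> 2 * onorm X * onorm Y * ?W"
    if "norm x = 1" for x
  proof -
    have "norm (X x) \<le> onorm X" "norm (Y x) \<le> onorm Y"
      using onorm[OF bounded_op_imp_bounded_linear[OF assms(3)], of x]
        onorm[OF bounded_op_imp_bounded_linear[OF assms(4)], of x] that by simp_all
    then have "norm (Y x) * norm (X x) \<le> onorm X * onorm Y"
      by (metis mult.commute mult_mono norm_ge_zero X)
    then have norms: "norm (Y x) * norm (X x) * ?W \<le> onorm X * onorm Y * ?W"
      using W by (rule mult_right_mono)
    have "cmod (cinner (Xs (A (Y x)) + Ys (B (X x))) x)
        = cmod (cinner (A (Y x)) (X x) + cinner (B (X x)) (Y x))"
      by (simp add: cinner_add_left cinner_adjoint_left[OF assms(5)]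
          cinner_adjoint_left[OF assms(6)])
    also have "\<dots> \<le> 2 * norm (Y x) * norm (X x) * ?W"
      by (rule cmod_cinner_offdiag_le_numerical_radius2[OF assms(1,2)])
    also have "\<dots> \<le> 2 * onorm X * onorm Y * ?W"
      using norms by (simp add: mult.assoc)
    finally show ?thesis .
  qed
  then show ?thesis
    unfolding numerical_radius_def using W X Y by (intro Sup_insert_zero_le) auto
qed

theorem theorem4p15:
  fixes A B X Y Xs Ys :: "'a::chilbert_space \<Rightarrow> 'a"
  assumes "bounded_op A" and "bounded_op B" and "bounded_op X" and "bounded_op Y"
    and "is_adjoint X Xs" and "is_adjoint Y Ys"
  shows "numerical_radius (\<lambda>x. Xs (A (Y x)) + Ys (B (X x)))
           \<le> 2 * onorm X * onorm Y * numerical_radius2 (\<lambda>_. 0) A B (\<lambda>_. 0)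
         \<and> numerical_radius (\<lambda>x. Xs (A (Y x)) + Ys (A (X x)))
           \<le> 2 * onorm X * onorm Y * numerical_radius A"
proof
  show "numerical_radius (\<lambda>x. Xs (A (Y x)) + Ys (B (X x)))
      \<le> 2 * onorm X * onorm Y * numerical_radius2 (\<lambda>_. 0) A B (\<lambda>_. 0)"
    by (rule numerical_radius_adjoint_sandwich_le[OF assms])
  have "numerical_radius (\<lambda>x. Xs (A (Y x)) + Ys (A (X x)))
      \<le> 2 * onorm X * onorm Y * numerical_radius2 (\<lambda>_. 0) A A (\<lambda>_. 0)"
    by (rule numerical_radius_adjoint_sandwich_le[OF assms(1,1,3-6)])
  also have "\<dots> \<le> 2 * onorm X * onorm Y * numerical_radius A"
    using numerical_radius2_offdiag_le_numerical_radius[OF assms(1)]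
      onorm_bounded_op_nonneg[OF assms(3)] onorm_bounded_op_nonneg[OF assms(4)]
    by (simp add: mult_left_mono)
  finally show "numerical_radius (\<lambda>x. Xs (A (Y x)) + Ys (A (X x)))
      \<le> 2 * onorm X * onorm Y * numerical_radius A" .
qed

end
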